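(* Let $q$ be an odd prime and $a\in(\mathbb{Z}/q\mathbb{Z})^\times$. (i) If $q\ne5$, or if $q=5$ and $a\ne 3+5\mathbb{Z}$, then there exists $x\in(\mathbb{Z}/q\mathbb{Z})^\times$ such that $\left(\frac{x+a/x}{q}\right)\ne1$. (ii) If $q\notin\{7,13\}$, then there exists $x\in(\mathbb{Z}/q\mathbb{Z})^\times$ such that $\left(\frac{x^6+a}{q}\right)\ne1$.
   Context: $\left(\frac{\cdot}{q}\right)$ denotes the Legendre symbol modulo $q$ (taking value $0$ on the zero class). *)

theory Defs
  imports "HOL-Number_Theory.Number_Theory"
begin

end

theory Submission
  imports Defs
begin

text \<open>
  Suppose all the values in question are quadratic residues. Writing \<open>\<chi>\<close> for the Legendre symbol,
  \<open>\<chi>(x + a/x) = \<chi>(x) \<chi>(x\<^sup>2 + a)\<close>, so in both parts the sum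
  \<open>S(b) = \<Sum>\<^sub>x \<psi>(x) \<chi>(x\<^sup>n + b)\<close> over the units \<open>x\<close> equals \<open>q - 1\<close> at \<open>b = a\<close>, where
  \<open>(n, \<psi>) = (2, \<chi>)\<close> in (i) and \<open>(n, \<psi>) = (6, 1)\<close> in (ii). Substituting \<open>x \<mapsto> l x\<close> gives
  \<open>S(l\<^sup>n b) = \<psi>(l) S(b)\<close>, so \<open>S(b)\<^sup>2 = (q - 1)\<^sup>2\<close> for all \<open>b = l\<^sup>n a\<close>; these form a set of at least
  \<open>(q - 1)/n\<close> elements. On the other hand, expanding the square and using
  \<open>\<Sum>\<^sub>b \<chi>((b + u)(b + v)) = -1\<close> for \<open>u \<noteq> v\<close> gives \<open>\<Sum>\<^sub>b S(b)\<^sup>2 \<le> n q (q - 1) - (\<Sum>\<^sub>x \<psi>(x))\<^sup>2\<close>.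
  Comparing the two bounds forces \<open>q \<le> 5\<close> in (i) and \<open>q \<le> 32\<close> in (ii); the remaining primes are
  checked by evaluation, computing \<open>\<chi>\<close> through Euler's criterion (\<open>euler_residue\<close>).
\<close>

definition euler_residue :: "int \<Rightarrow> int \<Rightarrow> int" where
  "euler_residue q m = (m mod q) ^ nat ((q - 1) div 2) mod q"

definition legendre_power_sum :: "(int \<Rightarrow> int) \<Rightarrow> nat \<Rightarrow> int \<Rightarrow> int \<Rightarrow> int" where
  "legendre_power_sum \<psi> n q b = (\<Sum>x\<in>{1..<q}. \<psi> x * Legendre (x ^ n + b) q)"

context
  fixes q :: int
  assumes prime: "prime q" and q_gt_2: "q > 2"
begin

lemma Legendre_cong: "[m = n] (mod q) \<Longrightarrow> Legendre m q = Legendre n q"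
  unfolding Legendre_def QuadRes_def
  by (smt (verit, ccfv_SIG) cong_sym cong_trans)

lemma Legendre_mod: "Legendre (m mod q) q = Legendre m q"
  by (rule Legendre_cong) (simp add: cong_def)

lemma Legendre_cases: "Legendre n q = 1 \<or> Legendre n q = 0 \<or> Legendre n q = -1"
  by (simp add: Legendre_def)

lemma abs_Legendre_le_1: "\<bar>Legendre n q\<bar> \<le> 1"
  by (simp add: Legendre_def)

lemma Legendre_eq_0_iff: "Legendre n q = 0 \<longleftrightarrow> q dvd n"
  by (auto simp: Legendre_def cong_0_iff)

lemma Legendre_unit_cases: "\<not> q dvd n \<Longrightarrow> Legendre n q = 1 \<or> Legendre n q = -1"
  using Legendre_cases[of n] Legendre_eq_0_iff[of n] by auto

lemma euler_criterion_int: "[Legendre a q = a ^ nat ((q - 1) div 2)] (mod q)"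
proof -
  have q_nat: "q = int (nat q)" using q_gt_2 by simp
  have "prime (nat q)" "2 < nat q" using prime q_gt_2 by simp_all
  from euler_criterion[OF this, of a]
  have "[Legendre a (int (nat q)) = a ^ ((nat q - 1) div 2)] (mod int (nat q))" .
  moreover have "(nat q - 1) div 2 = nat ((q - 1) div 2)"
    using q_gt_2 by (simp add: nat_div_distrib nat_diff_distrib')
  ultimately show ?thesis by (simp only: flip: q_nat)
qed

lemma Legendre_mult: "Legendre (m * n) q = Legendre m q * Legendre n q"
proof -
  let ?k = "nat ((q - 1) div 2)"
  have "[Legendre m q * Legendre n q = m ^ ?k * n ^ ?k] (mod q)"
    using euler_criterion_int[of m] euler_criterion_int[of n] by (rule cong_mult)
  hence "[Legendre (m * n) q = Legendre m q * Legendre n q] (mod q)"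
    using euler_criterion_int[of "m * n"] by (metis cong_sym cong_trans power_mult_distrib)
  hence dvd: "q dvd Legendre (m * n) q - Legendre m q * Legendre n q"
    by (simp add: cong_iff_dvd_diff cong_sym_eq)
  \<comment> \<open>both sides lie in \<open>{-1, 0, 1}\<close>, so their difference is too small to be a nonzero multiple of \<open>q\<close>\<close>
  have "\<bar>Legendre (m * n) q - Legendre m q * Legendre n q\<bar> < q"
    using Legendre_cases[of "m * n"] Legendre_cases[of m] Legendre_cases[of n] q_gt_2 by auto
  with dvd_imp_le_int[OF _ dvd] show ?thesis
    by fastforce
qed

lemma Legendre_square: "\<not> q dvd x \<Longrightarrow> Legendre (x ^ 2) q = 1"
  using prime_dvd_power[OF prime, of x 2]
  by (auto simp: Legendre_def QuadRes_def cong_0_iff intro: cong_refl)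

lemma Legendre_one: "Legendre 1 q = 1"
  using Legendre_square[of 1] q_gt_2 by (simp add: zdvd1_eq)

lemma Legendre_power: "Legendre (x ^ k) q = Legendre x q ^ k"
  by (induction k) (simp_all add: Legendre_mult Legendre_one)

lemma Legendre_even_power: "\<not> q dvd x \<Longrightarrow> even k \<Longrightarrow> Legendre (x ^ k) q = 1"
proof -
  assume "\<not> q dvd x" "even k"
  then obtain j where "k = 2 * j" "Legendre x q ^ 2 = 1"
    using Legendre_unit_cases[of x] by (auto elim!: evenE)
  then show ?thesis by (simp add: Legendre_power power_mult)
qed

lemma Legendre_add_inverse:
  assumes "[x * y = 1] (mod q)"
  shows "Legendre (x + a * y) q = Legendre x q * Legendre (x ^ 2 + a) q"
proof -
  have "[x + a * y = x * (x * y) + a * y] (mod q)"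
    using assms by (intro cong_add cong_refl) (metis cong_scalar_left cong_sym mult.right_neutral)
  hence "[x + a * y = y * (x ^ 2 + a)] (mod q)"
    by (simp add: algebra_simps power2_eq_square)
  hence "Legendre (x + a * y) q = Legendre y q * Legendre (x ^ 2 + a) q"
    using Legendre_cong Legendre_mult by metis
  moreover have "Legendre x q * Legendre y q = 1"
    using Legendre_cong[OF assms] Legendre_mult Legendre_one by metis
  ultimately show ?thesis
    using Legendre_cases[of x] Legendre_cases[of y] by auto
qed

lemma not_dvd_if_unit_residue: "x \<in> {1..<q} \<Longrightarrow> \<not> q dvd x"
  using zdvd_imp_le[of q x] by auto

lemma mod_in_unit_residues: "\<not> q dvd x \<Longrightarrow> x mod q \<in> {1..<q}"
proof -
  assume "\<not> q dvd x"
  hence "x mod q \<noteq> 0" by (simp add: dvd_eq_mod_eq_0)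
  moreover have "x mod q \<ge> 0" "x mod q < q" using q_gt_2 by auto
  ultimately show ?thesis by auto
qed

lemma coprime_if_not_dvd: "\<not> q dvd c \<Longrightarrow> coprime c q"
  using prime prime_imp_coprime coprime_commute by blast

lemma bij_betw_mult_mod_units: "\<not> q dvd c \<Longrightarrow> bij_betw (\<lambda>x. c * x mod q) {1..<q} {1..<q}"
  by (rule bij_betw_int_remainders_mult[OF coprime_if_not_dvd])

lemma bij_betw_modular_inverse: "bij_betw (modular_inverse q) {1..<q} {1..<q}"
proof -
  have inverse_unit: "modular_inverse q x \<in> {1..<q}" if "x \<in> {1..<q}" for x
    using that q_gt_2 not_dvd_if_unit_residue coprime_if_not_dvd
    by (auto intro!: mult_modular_inverse_int_pos modular_inverse_int_less simp: int_one_le_iff_zero_less)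
  have involution: "modular_inverse q (modular_inverse q x) = x" if "x \<in> {1..<q}" for x
    using that not_dvd_if_unit_residue coprime_if_not_dvd
    by (intro modular_inverse_int_eqI) (auto intro: cong_modular_inverse2)
  show ?thesis
    by (rule bij_betwI[where g = "modular_inverse q"]) (use inverse_unit involution in auto)
qed

lemma bij_betw_add_mod: "bij_betw (\<lambda>x. (x + u) mod q) {0..<q} {0..<q}"
  by (rule bij_betwI[where g = "\<lambda>x. (x - u) mod q"])
    (use q_gt_2 in \<open>auto simp: mod_diff_left_eq mod_add_left_eq\<close>)

lemma sum_residues_eq: "(\<Sum>r\<in>{0..<q}. f r) = f 0 + (\<Sum>r\<in>{1..<q}. f r)"
proof -
  have "{0..<q} = insert 0 {1..<q}" using q_gt_2 by auto
  then show ?thesis by simp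
qed

lemma exists_nonresidue: "\<exists>g. \<not> q dvd g \<and> Legendre g q = -1"
proof -
  define p where "p = nat q"
  define k where "k = (p - 1) div 2"
  have p: "prime p" "p \<ge> 3" "q = int p" using prime q_gt_2 by (simp_all add: p_def)
  have "k > 0" using p k_def by simp
  \<comment> \<open>the residues \<open>x\<close> with \<open>x ^ k = 1\<close> are roots of a polynomial of degree \<open>k < p - 1\<close>\<close>
  have "card {x\<in>{..<p}. [x ^ k = 1] (mod p)} < card {1..<p}"
    using roots_mod_prime_bound[OF p(1) \<open>k > 0\<close>, of 1] p k_def by simp
  hence "\<not> {1..<p} \<subseteq> {x\<in>{..<p}. [x ^ k = 1] (mod p)}"
    using card_mono[of "{x\<in>{..<p}. [x ^ k = 1] (mod p)}" "{1..<p}"] by auto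
  then obtain x where x: "x \<in> {1..<p}" and "x \<notin> {x\<in>{..<p}. [x ^ k = 1] (mod p)}"
    by blast
  hence not_root: "\<not> [x ^ k = 1] (mod p)" by simp
  have "\<not> q dvd int x"
    using x p(3) by (auto dest: dvd_imp_le)
  moreover have "Legendre (int x) q \<noteq> 1"
  proof
    assume "Legendre (int x) q = 1"
    hence "[1 = int x ^ nat ((q - 1) div 2)] (mod q)" using euler_criterion_int[of "int x"] by simp
    moreover have "nat ((q - 1) div 2) = k"
      using k_def p by (simp add: nat_div_distrib nat_diff_distrib')
    ultimately have "[int (x ^ k) = int 1] (mod int p)" using p(3) by (simp add: cong_sym_eq)
    thus False using not_root cong_int_iff by blast
  qed
  ultimately show ?thesis using Legendre_unit_cases by blast
qed

lemma sum_Legendre_units: "(\<Sum>r\<in>{1..<q}. Legendre r q) = 0"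
proof -
  obtain g where g: "\<not> q dvd g" "Legendre g q = -1" using exists_nonresidue by blast
  have "(\<Sum>r\<in>{1..<q}. Legendre r q) = (\<Sum>r\<in>{1..<q}. Legendre (g * r mod q) q)"
    using sum.reindex_bij_betw[OF bij_betw_mult_mod_units[OF g(1)], of "\<lambda>r. Legendre r q"] by simp
  also have "\<dots> = - (\<Sum>r\<in>{1..<q}. Legendre r q)"
    by (simp add: Legendre_mod Legendre_mult g(2) sum_negf)
  finally show ?thesis by simp
qed

lemma sum_Legendre: "(\<Sum>r\<in>{0..<q}. Legendre r q) = 0"
  using sum_Legendre_units sum_residues_eq[of "\<lambda>r. Legendre r q"] Legendre_eq_0_iff[of 0] by simp

lemma sum_Legendre_succ_units: "(\<Sum>c\<in>{1..<q}. Legendre (c + 1) q) = -1"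
proof -
  have "(\<Sum>c\<in>{0..<q}. Legendre ((c + 1) mod q) q) = (\<Sum>c\<in>{0..<q}. Legendre c q)"
    using sum.reindex_bij_betw[OF bij_betw_add_mod[of 1], of "\<lambda>c. Legendre c q"] by simp
  then show ?thesis
    using sum_residues_eq[of "\<lambda>c. Legendre (c + 1) q"] sum_Legendre
    by (simp add: Legendre_mod Legendre_one)
qed

lemma sum_Legendre_mult_add:
  assumes d: "\<not> q dvd d"
  shows "(\<Sum>a\<in>{0..<q}. Legendre (a * (a + d)) q) = -1"
proof -
  have "(\<Sum>a\<in>{0..<q}. Legendre (a * (a + d)) q) = (\<Sum>a\<in>{1..<q}. Legendre (a * (a + d)) q)"
    using sum_residues_eq[of "\<lambda>a. Legendre (a * (a + d)) q"] Legendre_eq_0_iff[of 0] by simp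
  also have "\<dots> = (\<Sum>a\<in>{1..<q}. Legendre (1 + d * modular_inverse q a) q)"
  proof (rule sum.cong[OF refl])
    fix a assume a: "a \<in> {1..<q}"
    let ?a' = "modular_inverse q a"
    have "[a * ?a' = 1] (mod q)"
      using a not_dvd_if_unit_residue coprime_if_not_dvd cong_modular_inverse1 by blast
    hence "[a * a + d * a * (a * ?a') = a * a + d * a * 1] (mod q)"
      by (intro cong_add cong_mult cong_refl)
    hence "[a\<^sup>2 * (1 + d * ?a') = a * (a + d)] (mod q)"
      by (simp add: algebra_simps power2_eq_square)
    then show "Legendre (a * (a + d)) q = Legendre (1 + d * ?a') q"
      using Legendre_cong Legendre_mult Legendre_square[OF not_dvd_if_unit_residue[OF a]]
      by (metis mult_1)
  qed
  also have "\<dots> = (\<Sum>b\<in>{1..<q}. Legendre (1 + d * b) q)"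
    using sum.reindex_bij_betw[OF bij_betw_modular_inverse, of "\<lambda>b. Legendre (1 + d * b) q"] by simp
  also have "\<dots> = (\<Sum>b\<in>{1..<q}. Legendre (d * b mod q + 1) q)"
    by (intro sum.cong refl Legendre_cong) (simp add: cong_def mod_add_right_eq add.commute)
  also have "\<dots> = (\<Sum>c\<in>{1..<q}. Legendre (c + 1) q)"
    using sum.reindex_bij_betw[OF bij_betw_mult_mod_units[OF d], of "\<lambda>c. Legendre (c + 1) q"] by simp
  finally show ?thesis using sum_Legendre_succ_units by simp
qed

lemma sum_Legendre_mult_shifts:
  "(\<Sum>a\<in>{0..<q}. Legendre ((a + u) * (a + v)) q) = (if [u = v] (mod q) then q - 1 else -1)"
proof -
  define G where "G b = Legendre (b * (b + (v - u))) q" for b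
  have "(\<Sum>a\<in>{0..<q}. Legendre ((a + u) * (a + v)) q) = (\<Sum>a\<in>{0..<q}. G ((a + u) mod q))"
  proof (rule sum.cong[OF refl])
    fix a
    have "[((a + u) mod q) * ((a + u) mod q + (v - u)) = (a + u) * ((a + u) + (v - u))] (mod q)"
      by (intro cong_mult cong_add cong_refl) (simp_all add: cong_def)
    thus "Legendre ((a + u) * (a + v)) q = G ((a + u) mod q)"
      unfolding G_def by (intro Legendre_cong) (simp add: cong_sym_eq)
  qed
  also have "\<dots> = (\<Sum>b\<in>{0..<q}. G b)"
    using sum.reindex_bij_betw[OF bij_betw_add_mod[of u], of G] by simp
  finally have shift: "(\<Sum>a\<in>{0..<q}. Legendre ((a + u) * (a + v)) q) = (\<Sum>b\<in>{0..<q}. G b)" .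
  show ?thesis
  proof (cases "[u = v] (mod q)")
    case False
    hence "\<not> q dvd v - u" by (simp add: cong_iff_dvd_diff cong_sym_eq dvd_diff_commute)
    from sum_Legendre_mult_add[OF this] show ?thesis using shift False unfolding G_def by simp
  next
    case True
    hence "[v - u = 0] (mod q)" by (simp add: cong_iff_dvd_diff cong_sym_eq dvd_diff_commute cong_0_iff)
    hence "[b * (b + (v - u)) = b\<^sup>2] (mod q)" for b
      using cong_add[OF cong_refl[of b]] cong_scalar_left by (fastforce simp: power2_eq_square)
    hence "G b = 1" if "b \<in> {1..<q}" for b
      unfolding G_def using Legendre_cong Legendre_square not_dvd_if_unit_residue that by metis
    then show ?thesis
      using shift True sum_residues_eq[of G] Legendre_eq_0_iff[of 0] q_gt_2 by (simp add: G_def)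
  qed
qed

lemma card_roots_le:
  assumes n: "n > 0"
  shows "card {y\<in>{1..<q}. [y ^ n = c] (mod q)} \<le> n"
proof -
  define p where "p = nat q"
  have p: "prime p" "q = int p" using prime q_gt_2 by (simp_all add: p_def)
  let ?A = "{x\<in>{..<p}. [x ^ n = nat (c mod q)] (mod p)}"
  have "{y\<in>{1..<q}. [y ^ n = c] (mod q)} \<subseteq> int ` ?A"
  proof
    fix y assume y: "y \<in> {y\<in>{1..<q}. [y ^ n = c] (mod q)}"
    hence y_nat: "y = int (nat y)" and "nat y < p" using p_def by auto
    have "[y ^ n = c mod q] (mod q)" using y by (simp add: cong_def)
    moreover have "int (nat y ^ n) = y ^ n" by (metis y_nat of_nat_power)
    moreover have "int (nat (c mod q)) = c mod q" using q_gt_2 by simp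
    ultimately have "[int (nat y ^ n) = int (nat (c mod q))] (mod int p)" using p(2) by simp
    hence "nat y \<in> ?A" using \<open>nat y < p\<close> cong_int_iff by blast
    thus "y \<in> int ` ?A" using y_nat by blast
  qed
  hence "card {y\<in>{1..<q}. [y ^ n = c] (mod q)} \<le> card (int ` ?A)"
    by (intro card_mono) simp_all
  also have "\<dots> \<le> card ?A" by (rule card_image_le) simp
  also have "\<dots> \<le> n" using roots_mod_prime_bound[OF p(1) n] by simp
  finally show ?thesis .
qed

lemma card_power_orbit_ge:
  assumes a: "\<not> q dvd a" and n: "n > 0"
  shows "q - 1 \<le> int n * int (card ((\<lambda>l. l ^ n * a mod q) ` {1..<q}))"
proof -
  let ?f = "\<lambda>l. l ^ n * a mod q"
  let ?orbit = "?f ` {1..<q}"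
  have fibre_le: "card {l\<in>{1..<q}. ?f l = b} \<le> n" if "b \<in> ?orbit" for b
  proof -
    obtain m where m: "m \<in> {1..<q}" "b = ?f m" using \<open>b \<in> ?orbit\<close> by auto
    have "{l\<in>{1..<q}. ?f l = b} \<subseteq> {y\<in>{1..<q}. [y ^ n = m ^ n] (mod q)}"
      using m coprime_if_not_dvd[OF a] cong_mult_lcancel by (auto simp: cong_def mult.commute)
    hence "card {l\<in>{1..<q}. ?f l = b} \<le> card {y\<in>{1..<q}. [y ^ n = m ^ n] (mod q)}"
      by (intro card_mono) (auto intro: finite_subset[of _ "{1..<q}"])
    also have "\<dots> \<le> n" by (rule card_roots_le[OF n])
    finally show ?thesis .
  qed
  have "{1..<q} = (\<Union>b\<in>?orbit. {l\<in>{1..<q}. ?f l = b})" by auto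
  hence "card {1..<q} = card (\<Union>b\<in>?orbit. {l\<in>{1..<q}. ?f l = b})" by (rule arg_cong)
  also have "\<dots> \<le> (\<Sum>b\<in>?orbit. card {l\<in>{1..<q}. ?f l = b})"
    by (rule card_UN_le) simp
  also have "\<dots> \<le> (\<Sum>b\<in>?orbit. n)" using fibre_le by (rule sum_mono)
  finally have "nat (q - 1) \<le> n * card ?orbit" by (simp add: mult.commute)
  then have "int (nat (q - 1)) \<le> int n * int (card ?orbit)"
    by (metis of_nat_le_iff of_nat_mult)
  then show ?thesis using q_gt_2 by simp
qed

lemma sum_if_cong_power_le:
  assumes w: "\<And>x y. w x y \<le> 1" and n: "n > 0"
  shows "(\<Sum>x\<in>{1..<q}. \<Sum>y\<in>{1..<q}. w x y * (if [x ^ n = y ^ n] (mod q) then q else 0))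
           \<le> int n * q * (q - 1)"
proof -
  have "(\<Sum>x\<in>{1..<q}. \<Sum>y\<in>{1..<q}. w x y * (if [x ^ n = y ^ n] (mod q) then q else 0))
      \<le> (\<Sum>x\<in>{1..<q}. \<Sum>y\<in>{1..<q}. (if [y ^ n = x ^ n] (mod q) then q else 0))"
    using w q_gt_2 by (intro sum_mono) (auto simp: cong_sym_eq)
  also have "\<dots> = (\<Sum>x\<in>{1..<q}. q * int (card {y\<in>{1..<q}. [y ^ n = x ^ n] (mod q)}))"
    by (simp add: sum.inter_filter[symmetric] mult.commute)
  also have "\<dots> \<le> (\<Sum>x\<in>{1..<q}. q * int n)"
    using card_roots_le[OF n] q_gt_2 by (intro sum_mono mult_left_mono) auto
  also have "\<dots> = int n * q * (q - 1)" using q_gt_2 by simp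
  finally show ?thesis .
qed

lemma sum_square_legendre_power_sum:
  "(\<Sum>b\<in>{0..<q}. legendre_power_sum \<psi> n q b ^ 2)
     = (\<Sum>x\<in>{1..<q}. \<Sum>y\<in>{1..<q}. \<psi> x * \<psi> y * (if [x ^ n = y ^ n] (mod q) then q - 1 else -1))"
proof -
  have "(\<Sum>b\<in>{0..<q}. legendre_power_sum \<psi> n q b ^ 2)
      = (\<Sum>b\<in>{0..<q}. \<Sum>x\<in>{1..<q}. \<Sum>y\<in>{1..<q}.
           (\<psi> x * Legendre (x ^ n + b) q) * (\<psi> y * Legendre (y ^ n + b) q))"
    unfolding legendre_power_sum_def power2_eq_square by (simp add: sum_product)
  also have "\<dots> = (\<Sum>x\<in>{1..<q}. \<Sum>y\<in>{1..<q}. \<Sum>b\<in>{0..<q}.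
           (\<psi> x * Legendre (x ^ n + b) q) * (\<psi> y * Legendre (y ^ n + b) q))"
    by (subst sum.swap) (simp add: sum.swap[of _ "{0..<q}"])
  also have "\<dots> = (\<Sum>x\<in>{1..<q}. \<Sum>y\<in>{1..<q}.
           \<psi> x * \<psi> y * (\<Sum>b\<in>{0..<q}. Legendre ((b + x ^ n) * (b + y ^ n)) q))"
    by (simp add: sum_distrib_left Legendre_mult ac_simps)
  also have "\<dots> = (\<Sum>x\<in>{1..<q}. \<Sum>y\<in>{1..<q}.
           \<psi> x * \<psi> y * (if [x ^ n = y ^ n] (mod q) then q - 1 else -1))"
    by (simp only: sum_Legendre_mult_shifts)
  finally show ?thesis .
qed

lemma sum_square_legendre_power_sum_le:
  assumes bounded: "\<And>x. \<bar>\<psi> x\<bar> \<le> 1" and n: "n > 0"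
  shows "(\<Sum>b\<in>{0..<q}. legendre_power_sum \<psi> n q b ^ 2)
           \<le> int n * q * (q - 1) - (\<Sum>x\<in>{1..<q}. \<psi> x)\<^sup>2"
proof -
  let ?w = "\<lambda>x y. \<psi> x * \<psi> y"
  have "(\<Sum>b\<in>{0..<q}. legendre_power_sum \<psi> n q b ^ 2)
      = (\<Sum>x\<in>{1..<q}. \<Sum>y\<in>{1..<q}. ?w x y * (if [x ^ n = y ^ n] (mod q) then q else 0) - ?w x y)"
    unfolding sum_square_legendre_power_sum by (intro sum.cong refl) (auto simp: algebra_simps)
  also have "\<dots> = (\<Sum>x\<in>{1..<q}. \<Sum>y\<in>{1..<q}. ?w x y * (if [x ^ n = y ^ n] (mod q) then q else 0))
                  - (\<Sum>x\<in>{1..<q}. \<psi> x)\<^sup>2"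
    by (simp only: sum_subtractf sum_product power2_eq_square)
  also have "\<dots> \<le> int n * q * (q - 1) - (\<Sum>x\<in>{1..<q}. \<psi> x)\<^sup>2"
  proof -
    have "?w x y \<le> 1" for x y
    proof -
      have "\<bar>\<psi> x\<bar> * \<bar>\<psi> y\<bar> \<le> 1" by (rule mult_le_one) (use bounded in auto)
      then show ?thesis by (metis abs_ge_self abs_mult order_trans)
    qed
    then show ?thesis using sum_if_cong_power_le[OF _ n] by (simp only: diff_right_mono)
  qed
  finally show ?thesis .
qed

lemma legendre_power_sum_scale:
  assumes mult: "\<And>x y. \<psi> (x * y) = \<psi> x * \<psi> y" and mod: "\<And>x. \<psi> (x mod q) = \<psi> x"
    and "even n" and l: "\<not> q dvd l"
  shows "legendre_power_sum \<psi> n q (l ^ n * b mod q) = \<psi> l * legendre_power_sum \<psi> n q b"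
proof -
  have "legendre_power_sum \<psi> n q (l ^ n * b mod q) = (\<Sum>x\<in>{1..<q}. \<psi> x * Legendre (x ^ n + l ^ n * b) q)"
    unfolding legendre_power_sum_def
    by (intro sum.cong refl arg_cong2[where f = "(*)"] Legendre_cong) (simp add: cong_def mod_add_right_eq)
  also have "\<dots> = (\<Sum>z\<in>{1..<q}. \<psi> (l * z mod q) * Legendre ((l * z mod q) ^ n + l ^ n * b) q)"
    using sum.reindex_bij_betw[OF bij_betw_mult_mod_units[OF l],
        of "\<lambda>x. \<psi> x * Legendre (x ^ n + l ^ n * b) q"] by simp
  also have "\<dots> = (\<Sum>z\<in>{1..<q}. \<psi> l * (\<psi> z * Legendre (z ^ n + b) q))"
  proof (rule sum.cong[OF refl])
    fix z
    have "[(l * z mod q) ^ n + l ^ n * b = (l * z) ^ n + l ^ n * b] (mod q)"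
      by (intro cong_add cong_pow cong_refl) (simp add: cong_def)
    hence "[(l * z mod q) ^ n + l ^ n * b = l ^ n * (z ^ n + b)] (mod q)"
      by (simp add: power_mult_distrib algebra_simps)
    hence "Legendre ((l * z mod q) ^ n + l ^ n * b) q = Legendre (z ^ n + b) q"
      using Legendre_cong Legendre_mult Legendre_even_power[OF l \<open>even n\<close>] by simp
    then show "\<psi> (l * z mod q) * Legendre ((l * z mod q) ^ n + l ^ n * b) q
                 = \<psi> l * (\<psi> z * Legendre (z ^ n + b) q)"
      by (simp add: mod mult)
  qed
  also have "\<dots> = \<psi> l * legendre_power_sum \<psi> n q b"
    by (simp add: legendre_power_sum_def sum_distrib_left)
  finally show ?thesis .
qed

lemma constant_legendre_power_sum_bound:
  assumes mult: "\<And>x y. \<psi> (x * y) = \<psi> x * \<psi> y" and mod: "\<And>x. \<psi> (x mod q) = \<psi> x"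
    and bounded: "\<And>x. \<bar>\<psi> x\<bar> \<le> 1" and n: "n > 0" "even n" and a: "\<not> q dvd a"
    and eq_1: "\<And>x. x \<in> {1..<q} \<Longrightarrow> \<psi> x * Legendre (x ^ n + a) q = 1"
  shows "(q - 1) ^ 3 \<le> int n * (int n * q * (q - 1) - (\<Sum>x\<in>{1..<q}. \<psi> x)\<^sup>2)"
proof -
  let ?S = "legendre_power_sum \<psi> n q"
  let ?orbit = "(\<lambda>l. l ^ n * a mod q) ` {1..<q}"
  have "?S a = q - 1"
    using eq_1 q_gt_2 by (simp add: legendre_power_sum_def)
  have orbit_value: "?S b ^ 2 = (q - 1)\<^sup>2" if "b \<in> ?orbit" for b
  proof -
    obtain l where l: "l \<in> {1..<q}" and b: "b = l ^ n * a mod q" using \<open>b \<in> ?orbit\<close> by auto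
    have "\<psi> l dvd 1" using eq_1[OF l] by (metis dvd_triv_left)
    hence "\<psi> l ^ 2 = 1" by (metis zdvd1_eq power2_abs power_one)
    then show ?thesis
      using b legendre_power_sum_scale[OF mult mod \<open>even n\<close> not_dvd_if_unit_residue[OF l]] \<open>?S a = q - 1\<close>
      by (simp add: power_mult_distrib)
  qed
  have "int (card ?orbit) * (q - 1)\<^sup>2 = (\<Sum>b\<in>?orbit. ?S b ^ 2)"
    using orbit_value by simp
  also have "\<dots> \<le> (\<Sum>b\<in>{0..<q}. ?S b ^ 2)"
    using q_gt_2 by (intro sum_mono2) auto
  also have "\<dots> \<le> int n * q * (q - 1) - (\<Sum>x\<in>{1..<q}. \<psi> x)\<^sup>2"
    using sum_square_legendre_power_sum_le[OF bounded n(1)] .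
  finally have "int n * (int (card ?orbit) * (q - 1)\<^sup>2)
                  \<le> int n * (int n * q * (q - 1) - (\<Sum>x\<in>{1..<q}. \<psi> x)\<^sup>2)"
    by (rule mult_left_mono) simp
  moreover have "(q - 1) * (q - 1)\<^sup>2 \<le> int n * int (card ?orbit) * (q - 1)\<^sup>2"
    using card_power_orbit_ge[OF a n(1)] by (intro mult_right_mono) simp_all
  ultimately show ?thesis by (simp add: power3_eq_cube power2_eq_square algebra_simps)
qed

lemma le_5_if_Legendre_mult_square_add_eq_1:
  assumes a: "\<not> q dvd a"
    and eq_1: "\<And>x. x \<in> {1..<q} \<Longrightarrow> Legendre x q * Legendre (x\<^sup>2 + a) q = 1"
  shows "q \<le> 5"
proof -
  have "(q - 1) ^ 3 \<le> int 2 * (int 2 * q * (q - 1) - (\<Sum>x\<in>{1..<q}. Legendre x q)\<^sup>2)"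
    using constant_legendre_power_sum_bound[OF Legendre_mult Legendre_mod abs_Legendre_le_1 _ _ a eq_1]
    by simp
  then have "(q - 1) * (q - 1)\<^sup>2 \<le> (q - 1) * (4 * q)"
    by (simp add: sum_Legendre_units power3_eq_cube power2_eq_square algebra_simps)
  then have "(q - 1)\<^sup>2 \<le> 4 * q"
    using q_gt_2 by (simp add: mult_le_cancel_left)
  show "q \<le> 5"
  proof (rule ccontr)
    assume "\<not> q \<le> 5"
    hence "5 * (q - 1) \<le> (q - 1)\<^sup>2" using mult_right_mono[of 5 "q - 1" "q - 1"] by (simp add: power2_eq_square)
    with \<open>(q - 1)\<^sup>2 \<le> 4 * q\<close> \<open>\<not> q \<le> 5\<close> show False by simp
  qed
qed

lemma le_32_if_Legendre_sixth_power_add_eq_1: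
  assumes a: "\<not> q dvd a"
    and eq_1: "\<And>x. x \<in> {1..<q} \<Longrightarrow> Legendre (x ^ 6 + a) q = 1"
  shows "q \<le> 32"
proof -
  have "(q - 1) ^ 3 \<le> int 6 * (int 6 * q * (q - 1) - (\<Sum>x\<in>{1..<q}. 1)\<^sup>2)"
    using eq_1 by (intro constant_legendre_power_sum_bound[OF _ _ _ _ _ a]) auto
  then have "(q - 1) * (q - 1)\<^sup>2 \<le> (q - 1) * (36 * q - 6 * (q - 1))"
    using q_gt_2 by (simp add: power3_eq_cube power2_eq_square algebra_simps)
  then have "(q - 1)\<^sup>2 \<le> 36 * q - 6 * (q - 1)"
    using q_gt_2 by (simp add: mult_le_cancel_left)
  show "q \<le> 32"
  proof (rule ccontr)
    assume "\<not> q \<le> 32"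
    hence "32 * (q - 1) \<le> (q - 1)\<^sup>2" using mult_right_mono[of 32 "q - 1" "q - 1"] by (simp add: power2_eq_square)
    with \<open>(q - 1)\<^sup>2 \<le> 36 * q - 6 * (q - 1)\<close> \<open>\<not> q \<le> 32\<close> show False by simp
  qed
qed

lemma euler_residue_if_Legendre_eq_1: "Legendre m q = 1 \<Longrightarrow> euler_residue q m = 1"
  using euler_criterion_int[of m] q_gt_2
  by (simp add: euler_residue_def cong_def power_mod)

end

lemma add_inverse_small_primes_check:
  "\<forall>q\<in>{3, 5}. \<forall>r\<in>set [1..q - 1]. (q = 5 \<and> r = 3) \<or>
     (\<exists>x\<in>set [1..q - 1]. euler_residue q (x * (x\<^sup>2 + r)) \<noteq> 1)"
  unfolding euler_residue_def by code_simp

lemma sixth_power_small_primes_check: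
  "\<forall>q\<in>set [3..32]. prime q \<and> q \<notin> {7, 13} \<longrightarrow>
     (\<forall>r\<in>set [1..q - 1]. \<exists>x\<in>set [1..q - 1]. euler_residue q (x ^ 6 + r) \<noteq> 1)"
  unfolding euler_residue_def by code_simp

lemma exists_Legendre_add_inverse_ne_1:
  fixes q a :: int
  assumes prime: "prime q" and q_gt_2: "q > 2" and a: "\<not> q dvd a"
    and exception: "q \<noteq> 5 \<or> \<not> [a = 3] (mod 5)"
  shows "\<exists>x y. \<not> q dvd x \<and> [x * y = 1] (mod q) \<and> Legendre (x + a * y) q \<noteq> 1"
proof (rule ccontr)
  assume none: "\<not> ?thesis"
  have eq_1: "Legendre (x * (x\<^sup>2 + a)) q = 1" if x: "x \<in> {1..<q}" for x
  proof -
    have "\<not> q dvd x" using not_dvd_if_unit_residue[OF prime q_gt_2 x] .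
    hence "[x * modular_inverse q x = 1] (mod q)"
      using coprime_if_not_dvd[OF prime q_gt_2] cong_modular_inverse1 by blast
    with none \<open>\<not> q dvd x\<close> show ?thesis
      using Legendre_add_inverse[OF prime q_gt_2] Legendre_mult[OF prime q_gt_2] by metis
  qed
  have "q \<le> 5"
    using le_5_if_Legendre_mult_square_add_eq_1[OF prime q_gt_2 a] eq_1 Legendre_mult[OF prime q_gt_2]
    by metis
  with prime q_gt_2 have "q \<in> {3, 5}"
    by (cases "q = 4") (auto simp: prime_int_iff dvd_def dest: spec[of _ 2])
  moreover have "a mod q \<in> set [1..q - 1]"
    using mod_in_unit_residues[OF prime q_gt_2 a] by simp
  ultimately have "(q = 5 \<and> a mod q = 3) \<or>
      (\<exists>x\<in>set [1..q - 1]. euler_residue q (x * (x\<^sup>2 + a mod q)) \<noteq> 1)"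
    using add_inverse_small_primes_check by blast
  then obtain x where x: "x \<in> set [1..q - 1]"
    and "euler_residue q (x * (x\<^sup>2 + a mod q)) \<noteq> 1"
    using exception by (auto simp: cong_def)
  moreover have "[x * (x\<^sup>2 + a mod q) = x * (x\<^sup>2 + a)] (mod q)"
    by (intro cong_mult cong_add cong_refl) (simp add: cong_def)
  hence "Legendre (x * (x\<^sup>2 + a mod q)) q = 1"
    using eq_1[of x] x Legendre_cong[OF prime q_gt_2] by simp
  ultimately show False using euler_residue_if_Legendre_eq_1[OF prime q_gt_2] by blast
qed

lemma exists_Legendre_sixth_power_add_ne_1:
  fixes q a :: int
  assumes prime: "prime q" and q_gt_2: "q > 2" and a: "\<not> q dvd a" and exception: "q \<notin> {7, 13}"
  shows "\<exists>x. \<not> q dvd x \<and> Legendre (x ^ 6 + a) q \<noteq> 1"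
proof (rule ccontr)
  assume "\<not> ?thesis"
  hence eq_1: "Legendre (x ^ 6 + a) q = 1" if "x \<in> {1..<q}" for x
    using not_dvd_if_unit_residue[OF prime q_gt_2 that] by blast
  have "q \<in> set [3..32]"
    using le_32_if_Legendre_sixth_power_add_eq_1[OF prime q_gt_2 a eq_1] q_gt_2
    by (simp only: set_upto) simp
  moreover have "a mod q \<in> set [1..q - 1]"
    using mod_in_unit_residues[OF prime q_gt_2 a] by simp
  ultimately obtain x where x: "x \<in> set [1..q - 1]" and "euler_residue q (x ^ 6 + a mod q) \<noteq> 1"
    using sixth_power_small_primes_check prime exception by blast
  moreover have "Legendre (x ^ 6 + a mod q) q = 1"
    using eq_1[of x] x Legendre_cong[OF prime q_gt_2, of "x ^ 6 + a mod q" "x ^ 6 + a"]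
    by (simp add: cong_def mod_add_right_eq)
  ultimately show False using euler_residue_if_Legendre_eq_1[OF prime q_gt_2] by blast
qed

theorem lemma2:
  fixes q a :: int
  assumes "prime q" and "odd q" and "\<not> q dvd a"
  shows "((q \<noteq> 5 \<or> \<not> [a = 3] (mod 5)) \<longrightarrow>
           (\<exists>x y. \<not> q dvd x \<and> [x * y = 1] (mod q) \<and> Legendre (x + a * y) q \<noteq> 1)) \<and>
         (q \<notin> {7, 13} \<longrightarrow>
           (\<exists>x. \<not> q dvd x \<and> Legendre (x ^ 6 + a) q \<noteq> 1))"
proof -
  have "q > 2"
    using assms(1,2) prime_ge_2_int[of q] by (cases "q = 2") auto
  then show ?thesis
    using exists_Legendre_add_inverse_ne_1 exists_Legendre_sixth_power_add_ne_1 assms(1,3) by blast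
qed

end
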